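(* Let $n$ be a positive integer. Then $V(n,2)\neq\emptyset$ if and only if $n=4k$ or $n=4k+1$ for some positive integer $k$.
   Context: Let $S=K[x_1,\ldots,x_n]$ over a field $K$. $V(n,2)$ is the set of $f$-ideals of $S$ of degree $2$, i.e. square-free monomial ideals $I$ all of whose minimal monomial generators have degree $2$ and which are $f$-ideals. Here, with $\sigma$ the bijection $x_{i_1}\cdots x_{i_k}\mapsto\{i_1,\ldots,i_k\}$ from square-free monomials to subsets of $[n]$, the facet complex $\delta_{\mathcal{F}}(I)$ is the simplicial complex with facets $\sigma(g)$ for $g$ in the minimal generating set $G(I)$, the Stanley–Reisner complex is $\delta_{\mathcal{N}}(I)=\{\sigma(g)\mid g \text{ square-free monomial},\ g\notin I\}$, and $I$ is an $f$-ideal if these two complexes have the same $f$-vector. *)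

theory Defs
  imports Main
begin

text \<open>A square-free monomial x_{i1}...x_{ik} of S = K[x_1..x_n] is identified with
  its support {i1,...,ik} (the bijection sigma). A square-free monomial ideal I is
  represented by sigma of its minimal monomial generating set G(I), a set of subsets
  of {1..n}. The field K plays no role.\<close>

definition sqfree_monomials :: "nat \<Rightarrow> nat set set" where
  "sqfree_monomials n = Pow {1..n}"

definition in_monomial_ideal :: "nat set set \<Rightarrow> nat set \<Rightarrow> bool" where
  "in_monomial_ideal G F \<longleftrightarrow> (\<exists>g\<in>G. g \<subseteq> F)"

definition facet_complex :: "nat set set \<Rightarrow> nat set set" where
  "facet_complex G = {F. \<exists>g\<in>G. F \<subseteq> g}"

definition SR_complex :: "nat \<Rightarrow> nat set set \<Rightarrow> nat set set" where
  "SR_complex n G = {F \<in> sqfree_monomials n. \<not> in_monomial_ideal G F}"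

text \<open>f-vector entry: number of faces with k vertices (i.e. f_{k-1}).\<close>
definition fnum :: "nat set set \<Rightarrow> nat \<Rightarrow> nat" where
  "fnum \<Delta> k = card {F \<in> \<Delta>. card F = k}"

definition same_f_vector :: "nat set set \<Rightarrow> nat set set \<Rightarrow> bool" where
  "same_f_vector \<Delta>1 \<Delta>2 \<longleftrightarrow> (\<forall>k. fnum \<Delta>1 k = fnum \<Delta>2 k)"

definition sqfree_gen_set :: "nat \<Rightarrow> nat set set \<Rightarrow> bool" where
  "sqfree_gen_set n G \<longleftrightarrow> G \<subseteq> sqfree_monomials n \<and>
     (\<forall>g\<in>G. \<forall>h\<in>G. g \<subseteq> h \<longrightarrow> g = h)"

definition f_ideal :: "nat \<Rightarrow> nat set set \<Rightarrow> bool" where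
  "f_ideal n G \<longleftrightarrow> same_f_vector (facet_complex G) (SR_complex n G)"

definition V :: "nat \<Rightarrow> nat \<Rightarrow> nat set set set" where
  "V n d = {G. sqfree_gen_set n G \<and> (\<forall>g\<in>G. card g = d) \<and> f_ideal n G}"

end

theory Submission
  imports Defs
begin

text \<open>
  A degree-2 generating set is a graph \<open>G\<close> on \<open>{1..n}\<close>. Its facet complex has as faces the
  empty set, the vertices covered by \<open>G\<close> and the edges of \<open>G\<close>; its Stanley-Reisner complex has
  the empty set, all \<open>n\<close> vertices, the non-edges, and the independent sets of \<open>G\<close>. So \<open>G\<close> is
  an f-ideal iff it is nonempty, covers every vertex, has exactly half of the \<open>n choose 2\<close> pairs
  as edges, and meets every triple. Halving forces \<open>n choose 2\<close> to be even, i.e.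
  \<open>n \<equiv> 0, 1 (mod 4)\<close>. Conversely, for \<open>n = 4k\<close> or \<open>4k+1\<close> the complement of a bipartite
  graph with the right number of edges works: every triple has two vertices on the same side.
\<close>

definition sqfree_monomials_deg :: "nat \<Rightarrow> nat \<Rightarrow> nat set set" where
  "sqfree_monomials_deg n d = {F \<in> sqfree_monomials n. card F = d}"

lemma finite_sqfree_monomials_deg: "finite (sqfree_monomials_deg n d)"
  unfolding sqfree_monomials_deg_def sqfree_monomials_def by simp

lemma card_sqfree_monomials_deg: "card (sqfree_monomials_deg n d) = n choose d"
  unfolding sqfree_monomials_deg_def sqfree_monomials_def using n_subsets[of "{1..n}" d] by simp

lemma sqfree_monomials_degD:
  assumes "F \<in> sqfree_monomials_deg n d"
  shows "F \<subseteq> {1..n}" "finite F" "card F = d"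
  using assms finite_subset[of F "{1..n}"]
  unfolding sqfree_monomials_deg_def sqfree_monomials_def by auto

lemma mem_V_iff: "G \<in> V n d \<longleftrightarrow> G \<subseteq> sqfree_monomials_deg n d \<and> f_ideal n G"
proof -
  have deg: "G \<subseteq> sqfree_monomials_deg n d \<longleftrightarrow> G \<subseteq> sqfree_monomials n \<and> (\<forall>g\<in>G. card g = d)"
    unfolding sqfree_monomials_deg_def by auto
  have "g = h" if "G \<subseteq> sqfree_monomials_deg n d" "g \<in> G" "h \<in> G" "g \<subseteq> h" for g h
    using sqfree_monomials_degD[OF subsetD[OF that(1)]] that card_subset_eq[of h g] by metis
  then show ?thesis
    using deg unfolding V_def sqfree_gen_set_def by auto
qed

lemma fnum_facet_complex_0:
  assumes "\<forall>g\<in>G. finite g"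
  shows "fnum (facet_complex G) 0 = (if G = {} then 0 else 1)"
proof -
  have "F = {}" if "g \<in> G" "F \<subseteq> g" "card F = 0" for F g
    using that assms finite_subset by fastforce
  then have "{F \<in> facet_complex G. card F = 0} = (if G = {} then {} else {{}})"
    unfolding facet_complex_def by auto
  then show ?thesis unfolding fnum_def by simp
qed

lemma fnum_facet_complex_1: "fnum (facet_complex G) 1 = card (\<Union>G)"
proof -
  have "{F \<in> facet_complex G. card F = 1} = (\<lambda>v. {v}) ` \<Union>G"
    unfolding facet_complex_def by (auto simp: card_1_singleton_iff)
  then show ?thesis unfolding fnum_def by (simp add: card_image)
qed

lemma fnum_facet_complex_deg:
  assumes "G \<subseteq> sqfree_monomials_deg n d"
  shows "fnum (facet_complex G) d = card G"
proof -
  have "F = g" if "g \<in> G" "F \<subseteq> g" "card F = d" for F g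
  proof -
    have "finite g" "card g = d"
      using sqfree_monomials_degD[OF subsetD[OF assms \<open>g \<in> G\<close>]] by auto
    then show ?thesis using card_subset_eq[of g F] that by simp
  qed
  then have "{F \<in> facet_complex G. card F = d} = G"
    using sqfree_monomials_degD(3)[OF subsetD[OF assms]] unfolding facet_complex_def by blast
  then show ?thesis unfolding fnum_def by simp
qed

lemma fnum_facet_complex_above_deg:
  assumes "G \<subseteq> sqfree_monomials_deg n d" and "d < k"
  shows "fnum (facet_complex G) k = 0"
proof -
  have "card F \<le> d" if "g \<in> G" "F \<subseteq> g" for F g
  proof -
    have "finite g" "card g = d"
      using sqfree_monomials_degD[OF subsetD[OF assms(1) \<open>g \<in> G\<close>]] by auto
    then show ?thesis using card_mono[of g F] that by simp
  qed
  then have "{F \<in> facet_complex G. card F = k} = {}"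
    using \<open>d < k\<close> unfolding facet_complex_def by (blast dest: leD)
  then show ?thesis unfolding fnum_def by (metis card.empty)
qed

lemma fnum_SR_complex_0:
  assumes "{} \<notin> G"
  shows "fnum (SR_complex n G) 0 = 1"
proof -
  have "{F \<in> SR_complex n G. card F = 0} = {{}}"
    using assms finite_subset[of _ "{1..n}"]
    unfolding SR_complex_def sqfree_monomials_def in_monomial_ideal_def
    by fastforce
  then show ?thesis unfolding fnum_def by simp
qed

lemma fnum_SR_complex_1:
  assumes "\<forall>g\<in>G. 2 \<le> card g"
  shows "fnum (SR_complex n G) 1 = n"
proof -
  have "\<not> g \<subseteq> {v}" if "g \<in> G" for g v
    using assms that card_mono[of "{v}" g] by fastforce
  then have "{F \<in> SR_complex n G. card F = 1} = (\<lambda>v. {v}) ` {1..n}"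
    unfolding SR_complex_def sqfree_monomials_def in_monomial_ideal_def
    by (auto simp: card_1_singleton_iff)
  then show ?thesis unfolding fnum_def by (simp add: card_image)
qed

lemma fnum_SR_complex_deg:
  assumes "G \<subseteq> sqfree_monomials_deg n d"
  shows "fnum (SR_complex n G) d = (n choose d) - card G"
proof -
  have "g = F" if "g \<in> G" "g \<subseteq> F" "F \<in> sqfree_monomials_deg n d" for F g
    using sqfree_monomials_degD[OF subsetD[OF assms]] sqfree_monomials_degD[OF that(3)]
      that card_subset_eq[of F g] by metis
  then have "{F \<in> SR_complex n G. card F = d} = sqfree_monomials_deg n d - G"
    unfolding SR_complex_def sqfree_monomials_deg_def in_monomial_ideal_def by blast
  moreover have "card (sqfree_monomials_deg n d - G) = (n choose d) - card G"
    using card_Diff_subset[OF finite_subset[OF assms finite_sqfree_monomials_deg] assms]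
    by (simp add: card_sqfree_monomials_deg)
  ultimately show ?thesis unfolding fnum_def by simp
qed

lemma fnum_SR_complex_eq_0_iff:
  "fnum (SR_complex n G) k = 0 \<longleftrightarrow> (\<forall>F\<in>sqfree_monomials_deg n k. in_monomial_ideal G F)"
proof -
  have "finite {F \<in> SR_complex n G. card F = k}"
    unfolding SR_complex_def sqfree_monomials_def by simp
  then have "fnum (SR_complex n G) k = 0 \<longleftrightarrow> {F \<in> SR_complex n G. card F = k} = {}"
    unfolding fnum_def by simp
  also have "\<dots> \<longleftrightarrow> (\<forall>F\<in>sqfree_monomials_deg n k. in_monomial_ideal G F)"
    unfolding SR_complex_def sqfree_monomials_deg_def by blast
  finally show ?thesis .
qed

lemma fnum_SR_complex_eq_0_mono:
  assumes "fnum (SR_complex n G) m = 0" and "m \<le> k"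
  shows "fnum (SR_complex n G) k = 0"
  unfolding fnum_SR_complex_eq_0_iff
proof
  fix F assume F: "F \<in> sqfree_monomials_deg n k"
  then have "m \<le> card F"
    using \<open>m \<le> k\<close> unfolding sqfree_monomials_deg_def by simp
  then obtain T where "T \<subseteq> F" "card T = m"
    by (rule obtain_subset_with_card_n)
  then have "T \<in> sqfree_monomials_deg n m"
    using F unfolding sqfree_monomials_deg_def sqfree_monomials_def by auto
  then have "in_monomial_ideal G T"
    using assms(1) fnum_SR_complex_eq_0_iff by blast
  then show "in_monomial_ideal G F"
    using \<open>T \<subseteq> F\<close> unfolding in_monomial_ideal_def by blast
qed

lemma f_ideal_deg2_iff:
  assumes G: "G \<subseteq> sqfree_monomials_deg n 2"
  shows "f_ideal n G \<longleftrightarrow> G \<noteq> {} \<and> \<Union>G = {1..n} \<and> 2 * card G = n choose 2 \<and>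
    (\<forall>F\<in>sqfree_monomials_deg n 3. in_monomial_ideal G F)"
proof -
  let ?fc = "fnum (facet_complex G)" and ?sr = "fnum (SR_complex n G)"
  have basics: "\<forall>g\<in>G. finite g" "{} \<notin> G" "\<forall>g\<in>G. 2 \<le> card g" "\<Union>G \<subseteq> {1..n}"
    using sqfree_monomials_degD[OF subsetD[OF G]] by fastforce+
  have "card G \<le> n choose 2"
    using card_mono[OF finite_sqfree_monomials_deg G] by (simp add: card_sqfree_monomials_deg)
  then have layer2: "?fc 2 = ?sr 2 \<longleftrightarrow> 2 * card G = n choose 2"
    using fnum_facet_complex_deg[OF G] fnum_SR_complex_deg[OF G] by linarith
  have "?fc 1 = ?sr 1 \<longleftrightarrow> card (\<Union>G) = n"
    by (simp only: fnum_facet_complex_1 fnum_SR_complex_1[OF basics(3)])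
  also have "\<dots> \<longleftrightarrow> \<Union>G = {1..n}"
    using card_subset_eq[OF finite_atLeastAtMost basics(4)] by auto
  finally have layer1: "?fc 1 = ?sr 1 \<longleftrightarrow> \<Union>G = {1..n}" .
  have layer3: "?fc 3 = ?sr 3 \<longleftrightarrow> (\<forall>F\<in>sqfree_monomials_deg n 3. in_monomial_ideal G F)"
    using fnum_facet_complex_above_deg[OF G, of 3] fnum_SR_complex_eq_0_iff by simp
  have higher: "?fc k = ?sr k" if "?fc 3 = ?sr 3" "3 \<le> k" for k
    using that fnum_facet_complex_above_deg[OF G] fnum_SR_complex_eq_0_mono by simp
  have "f_ideal n G \<longleftrightarrow> (\<forall>k\<le>3. ?fc k = ?sr k)"
    unfolding f_ideal_def same_f_vector_def using higher nat_le_linear by blast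
  also have "\<dots> \<longleftrightarrow> ?fc 0 = ?sr 0 \<and> ?fc 1 = ?sr 1 \<and> ?fc 2 = ?sr 2 \<and> ?fc 3 = ?sr 3"
    by (auto simp: le_Suc_eq numeral_3_eq_3 numeral_2_eq_2)
  finally show ?thesis
    using layer1 layer2 layer3 fnum_facet_complex_0 fnum_SR_complex_0 basics by simp
qed

lemma even_choose_two_iff: "even (n choose 2) \<longleftrightarrow> n mod 4 = 0 \<or> n mod 4 = 1"
proof -
  define q where "q = n div 4"
  have n: "n = 4 * q + n mod 4" unfolding q_def by simp
  consider "n mod 4 = 0" | "n mod 4 = 1" | "n mod 4 = 2" | "n mod 4 = 3" by linarith
  then show ?thesis
  proof cases
    case 1
    then have "n choose 2 = 2 * (q * (4 * q - 1))"
      using n by (cases q) (simp_all add: choose_two algebra_simps)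
    then show ?thesis using 1 by simp
  next
    case 2
    then have "n choose 2 = 2 * (q * (4 * q + 1))" using n by (simp add: choose_two algebra_simps)
    then show ?thesis using 2 by simp
  next
    case 3
    then have "n choose 2 = 2 * (q * (4 * q + 3)) + 1" using n by (simp add: choose_two algebra_simps)
    then show ?thesis using 3 by simp
  next
    case 4
    then have "n choose 2 = 2 * ((q + 1) * (4 * q + 1)) + 1" using n by (simp add: choose_two algebra_simps)
    then show ?thesis using 4 by simp
  qed
qed

lemma bool_pigeonhole:
  fixes P :: "'a \<Rightarrow> bool"
  assumes "2 < card F"
  obtains a b where "a \<in> F" "b \<in> F" "a \<noteq> b" "P a = P b"
proof -
  have "\<not> inj_on P F"
  proof
    assume inj: "inj_on P F"
    have "card F \<le> card (UNIV :: bool set)"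
      using card_inj_on_le[OF inj subset_UNIV] by simp
    then show False using assms by simp
  qed
  then show ?thesis using that unfolding inj_on_def by blast
qed

definition crossing_edges :: "nat \<Rightarrow> nat \<Rightarrow> nat set set" where
  "crossing_edges n k =
     (\<lambda>(i, j). {i, j}) ` ({1..2*k} \<times> {2*k+1..n} - (\<lambda>i. (i, i + 2*k)) ` {1..k})"

definition crossing_complement :: "nat \<Rightarrow> nat \<Rightarrow> nat set set" where
  "crossing_complement n k = sqfree_monomials_deg n 2 - crossing_edges n k"

lemma crossing_edge_sides:
  assumes "{a, b} \<in> crossing_edges n k"
  shows "(a \<le> 2*k) \<noteq> (b \<le> 2*k)"
proof -
  obtain i j where "{a, b} = {i, j}" "i \<le> 2*k" "2*k < j"
    using assms unfolding crossing_edges_def by auto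
  then show ?thesis by (auto simp: doubleton_eq_iff)
qed

lemma crossing_edges_subset: "crossing_edges n k \<subseteq> sqfree_monomials_deg n 2"
  unfolding crossing_edges_def sqfree_monomials_deg_def sqfree_monomials_def by auto

lemma same_side_pair_in_crossing_complement:
  assumes "a \<in> {1..n}" "b \<in> {1..n}" "a \<noteq> b" "(a \<le> 2*k) = (b \<le> 2*k)"
  shows "{a, b} \<in> crossing_complement n k"
  using assms crossing_edge_sides[of a b n k]
  unfolding crossing_complement_def sqfree_monomials_deg_def sqfree_monomials_def by auto

lemma card_crossing_edges:
  assumes "3*k \<le> n"
  shows "card (crossing_edges n k) + k = 2*k*(n - 2*k)"
proof -
  let ?pairs = "{1..2*k} \<times> {2*k+1..n}" and ?matching = "(\<lambda>i. (i, i + 2*k)) ` {1..k}"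
  have "inj_on (\<lambda>(i, j). {i, j}) (?pairs - ?matching)"
    by (auto simp: inj_on_def doubleton_eq_iff)
  then have "card (crossing_edges n k) = card (?pairs - ?matching)"
    unfolding crossing_edges_def by (rule card_image)
  moreover have "?matching \<subseteq> ?pairs" using assms by auto
  moreover have "card ?matching = k" by (simp add: card_image inj_on_def)
  moreover have "card ?pairs = 2*k*(n - 2*k)" by simp
  moreover have "k \<le> 2*k*(n - 2*k)" using assms by (cases k) auto
  ultimately show ?thesis by (simp add: card_Diff_subset)
qed

lemma choose_two_eq_twice_card_crossing_edges:
  assumes "n = 4*k \<or> n = 4*k + 1"
  shows "n choose 2 = 2 * card (crossing_edges n k)"
proof -
  have "3*k \<le> n" using assms by auto
  then have "card (crossing_edges n k) + k = 2*k*(n - 2*k)"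
    by (rule card_crossing_edges)
  moreover have "(n choose 2) + 2*k = 2 * (2*k*(n - 2*k))"
    using assms by (cases k) (auto simp: choose_two algebra_simps)
  ultimately show ?thesis by linarith
qed

lemma Union_crossing_complement:
  assumes "1 \<le> k" "2*k + 2 \<le> n"
  shows "\<Union>(crossing_complement n k) = {1..n}"
proof
  show "\<Union>(crossing_complement n k) \<subseteq> {1..n}"
    unfolding crossing_complement_def sqfree_monomials_deg_def sqfree_monomials_def by auto
next
  show "{1..n} \<subseteq> \<Union>(crossing_complement n k)"
  proof
    fix v assume v: "v \<in> {1..n}"
    obtain w where "w \<in> {1..n}" "w \<noteq> v" "(w \<le> 2*k) = (v \<le> 2*k)"
    proof (cases "v \<le> 2*k")
      case True
      then show ?thesis using that[of "if v = 1 then 2 else 1"] assms v by auto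
    next
      case False
      then show ?thesis using that[of "if v = 2*k + 1 then 2*k + 2 else 2*k + 1"] assms v by auto
    qed
    then have "{v, w} \<in> crossing_complement n k"
      using v by (intro same_side_pair_in_crossing_complement) auto
    then show "v \<in> \<Union>(crossing_complement n k)" by blast
  qed
qed

lemma in_monomial_ideal_crossing_complement:
  assumes "F \<in> sqfree_monomials_deg n 3"
  shows "in_monomial_ideal (crossing_complement n k) F"
proof -
  have "2 < card F" using sqfree_monomials_degD(3)[OF assms] by simp
  then obtain a b where ab: "a \<in> F" "b \<in> F" "a \<noteq> b" "(a \<le> 2*k) = (b \<le> 2*k)"
    by (rule bool_pigeonhole)
  have "a \<in> {1..n}" "b \<in> {1..n}" using ab(1,2) sqfree_monomials_degD(1)[OF assms] by auto
  with ab(3,4) have "{a, b} \<in> crossing_complement n k"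
    by (intro same_side_pair_in_crossing_complement)
  then show ?thesis
    using ab(1,2) unfolding in_monomial_ideal_def by (intro bexI[of _ "{a, b}"]) auto
qed

lemma crossing_complement_in_V:
  assumes "0 < k" "n = 4*k \<or> n = 4*k + 1"
  shows "crossing_complement n k \<in> V n 2"
proof -
  let ?G = "crossing_complement n k"
  have G: "?G \<subseteq> sqfree_monomials_deg n 2" unfolding crossing_complement_def by blast
  have cover: "\<Union>?G = {1..n}" using assms by (intro Union_crossing_complement) auto
  then have "?G \<noteq> {}" using assms by auto
  moreover have "2 * card ?G = n choose 2"
    using card_Diff_subset[OF finite_subset[OF crossing_edges_subset finite_sqfree_monomials_deg]
        crossing_edges_subset]
      choose_two_eq_twice_card_crossing_edges[OF assms(2)]
    unfolding crossing_complement_def card_sqfree_monomials_deg by simp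
  ultimately have "f_ideal n ?G"
    unfolding f_ideal_deg2_iff[OF G] using cover in_monomial_ideal_crossing_complement by blast
  then show ?thesis using G unfolding mem_V_iff by blast
qed

theorem proposition3p3:
  fixes n :: nat
  assumes "n > 0"
  shows "V n 2 \<noteq> {} \<longleftrightarrow> (\<exists>k::nat. k > 0 \<and> (n = 4 * k \<or> n = 4 * k + 1))"
proof
  assume "V n 2 \<noteq> {}"
  then obtain G where "G \<in> V n 2" by blast
  then have G: "G \<subseteq> sqfree_monomials_deg n 2" "f_ideal n G"
    unfolding mem_V_iff by auto
  then have "G \<noteq> {}" "2 * card G = n choose 2"
    unfolding f_ideal_deg2_iff[OF G(1)] by auto
  moreover have "finite G" using finite_subset[OF G(1) finite_sqfree_monomials_deg] .
  ultimately have "even (n choose 2)" "0 < n choose 2"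
    by (metis dvd_triv_left, metis card_gt_0_iff nat_0_less_mult_iff zero_less_numeral)
  then have "n mod 4 = 0 \<or> n mod 4 = 1" "2 \<le> n"
    by (simp_all add: even_choose_two_iff zero_less_binomial_iff)
  then show "\<exists>k>0. n = 4 * k \<or> n = 4 * k + 1"
    by presburger
next
  assume "\<exists>k>0. n = 4 * k \<or> n = 4 * k + 1"
  then show "V n 2 \<noteq> {}" using crossing_complement_in_V by blast
qed

end
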